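(* Let $k\ge4$ be even and let $(s_1,t_1\mid s_2,t_2\mid s_3,t_3)$ be a triple overlap in $\mathbb{C}$ with all $s_m,t_m\in\{1,\dots,k/2\}$, $s_1<s_2<s_3$ and $s_1<t_1$. Then $s_m<t_m$ for $m=1,2,3$ and $t_1<t_2<t_3$.
   Context: $\phi=\exp(2\pi\mathrm{i}/k)$, $\mathbf{k}=\{1,\dots,k-1\}$, $\mathbf{k}_0=\{0,\dots,k-1\}$. A quadruple $(i,j\mid s,t)\in\mathbf{k}^4$ with $i\ne s$ is an overlap if $\phi^\omega(\phi^j-1)(\phi^s-1)=(\phi^i-1)(\phi^t-1)$ for some $\omega\in\mathbf{k}_0$; it is trivial if one of $i\equiv\pm j$, $j\equiv\pm t$, $t\equiv\pm s$, $s\equiv\pm i\pmod k$ holds, nontrivial otherwise. $\mathcal{O}(\mathbb{C},k)$ is the set of nontrivial overlaps. A triple overlap $(s_1,t_1\mid s_2,t_2\mid s_3,t_3)$ (with $s_m,t_m\in\mathbf{k}$) means that $(s_1,t_1\mid s_2,t_2)$, $(s_2,t_2\mid s_3,t_3)$ and $(s_1,t_1\mid s_3,t_3)$ all belong to $\mathcal{O}(\mathbb{C},k)$. *)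

theory Defs
  imports "HOL-Analysis.Analysis" "HOL-Number_Theory.Cong"
begin

definition phi :: "nat \<Rightarrow> complex" where
  "phi k = exp (2 * pi * \<i> / of_nat k)"

definition kset :: "nat \<Rightarrow> nat set" where
  "kset k = {1..<k}"

definition is_overlap :: "nat \<Rightarrow> nat \<Rightarrow> nat \<Rightarrow> nat \<Rightarrow> nat \<Rightarrow> bool" where
  "is_overlap k i j s t \<longleftrightarrow>
     i \<in> kset k \<and> j \<in> kset k \<and> s \<in> kset k \<and> t \<in> kset k \<and> i \<noteq> s \<and>
     (\<exists>\<omega>\<in>{0..<k}. phi k ^ \<omega> * (phi k ^ j - 1) * (phi k ^ s - 1)
                     = (phi k ^ i - 1) * (phi k ^ t - 1))"

definition pm_cong :: "nat \<Rightarrow> nat \<Rightarrow> nat \<Rightarrow> bool" where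
  "pm_cong k a b \<longleftrightarrow> [int a = int b] (mod int k) \<or> [int a = - int b] (mod int k)"

definition trivial_overlap :: "nat \<Rightarrow> nat \<Rightarrow> nat \<Rightarrow> nat \<Rightarrow> nat \<Rightarrow> bool" where
  "trivial_overlap k i j s t \<longleftrightarrow>
     pm_cong k i j \<or> pm_cong k j t \<or> pm_cong k t s \<or> pm_cong k s i"

definition in_O :: "nat \<Rightarrow> nat \<Rightarrow> nat \<Rightarrow> nat \<Rightarrow> nat \<Rightarrow> bool" where
  "in_O k i j s t \<longleftrightarrow> is_overlap k i j s t \<and> \<not> trivial_overlap k i j s t"

definition triple_overlap :: "nat \<Rightarrow> nat \<Rightarrow> nat \<Rightarrow> nat \<Rightarrow> nat \<Rightarrow> nat \<Rightarrow> nat \<Rightarrow> bool" where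
  "triple_overlap k s1 t1 s2 t2 s3 t3 \<longleftrightarrow>
     in_O k s1 t1 s2 t2 \<and> in_O k s2 t2 s3 t3 \<and> in_O k s1 t1 s3 t3"

end

theory Submission
  imports Defs
begin

text \<open>Taking absolute values, an overlap (i,j | s,t) gives N j * N s = N i * N t
  for N a = |phi^a - 1|. On {0..k/2} the chord length N a = 2 sin(pi a / k) is
  strictly increasing and vanishes only at 0, so from s1 < s2 and s1 < t1 the
  product identity forces t1 < t2 and s2 < t2. Applying this to the overlaps
  (s1,t1 | s2,t2) and (s2,t2 | s3,t3) in turn gives the claim.\<close>

lemma phi_power_eq_cis: "phi k ^ a = cis (2 * pi * real a / real k)"
proof -
  have "phi k ^ a = exp (of_nat a * (2 * pi * \<i> / of_nat k))"
    unfolding phi_def by (simp only: exp_of_nat_mult)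
  also have "\<dots> = exp (\<i> * complex_of_real (2 * pi * real a / real k))"
    by (simp add: field_simps)
  finally show ?thesis by (simp add: cis_conv_exp)
qed

lemma norm_cis_minus_one_squared: "(norm (cis x - 1))\<^sup>2 = 2 - 2 * cos x"
proof -
  have "(norm (cis x - 1))\<^sup>2 = (cos x - 1)\<^sup>2 + (sin x)\<^sup>2"
    by (simp add: cmod_power2)
  also have "\<dots> = 2 - 2 * cos x"
    using sin_cos_squared_add[of x] by (simp add: power2_eq_square algebra_simps)
  finally show ?thesis .
qed

lemma strict_mono_on_norm_phi_power_minus_one:
  assumes "k > 0"
  shows "strict_mono_on {0..k div 2} (\<lambda>a. norm (phi k ^ a - 1))"
proof (rule strict_mono_onI)
  fix a b assume "a \<in> {0..k div 2}" "b \<in> {0..k div 2}" "a < b"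
  then have "2 * real b \<le> real k" by auto
  have "cos (2 * pi * real b / real k) < cos (2 * pi * real a / real k)"
  proof (rule cos_monotone_0_pi)
    show "2 * pi * real a / real k < 2 * pi * real b / real k"
      using \<open>a < b\<close> assms by (simp add: divide_strict_right_mono)
    have "2 * pi * real b / real k = pi * (2 * real b / real k)" by simp
    also have "\<dots> \<le> pi"
      using \<open>2 * real b \<le> real k\<close> assms
      by (intro mult_left_le) (auto simp: divide_le_eq_1)
    finally show "2 * pi * real b / real k \<le> pi" .
  qed simp
  then have "(norm (phi k ^ a - 1))\<^sup>2 < (norm (phi k ^ b - 1))\<^sup>2"
    by (simp add: phi_power_eq_cis norm_cis_minus_one_squared)
  then show "norm (phi k ^ a - 1) < norm (phi k ^ b - 1)"
    by (rule power_less_imp_less_base) simp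
qed

lemma overlap_norm_eq:
  assumes "is_overlap k i j s t"
  shows "norm (phi k ^ j - 1) * norm (phi k ^ s - 1)
       = norm (phi k ^ i - 1) * norm (phi k ^ t - 1)"
proof -
  obtain w where "phi k ^ w * (phi k ^ j - 1) * (phi k ^ s - 1)
                = (phi k ^ i - 1) * (phi k ^ t - 1)"
    using assms unfolding is_overlap_def by blast
  then have "norm (phi k ^ w) * norm (phi k ^ j - 1) * norm (phi k ^ s - 1)
           = norm (phi k ^ i - 1) * norm (phi k ^ t - 1)"
    by (metis norm_mult)
  then show ?thesis by (simp add: phi_power_eq_cis)
qed

lemma strict_mono_on_product_eq_imp_less:
  fixes f :: "'a::linorder \<Rightarrow> 'b::linordered_field"
  assumes mono: "strict_mono_on A f"
    and mem: "s1 \<in> A" "t1 \<in> A" "s2 \<in> A" "t2 \<in> A"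
    and eq: "f t1 * f s2 = f s1 * f t2"
    and pos: "0 < f s1"
    and "s1 < s2" "s1 < t1"
  shows "s2 < t2 \<and> t1 < t2"
proof -
  have "f s1 < f s2" "f s1 < f t1"
    using mono mem \<open>s1 < s2\<close> \<open>s1 < t1\<close> by (auto dest: strict_mono_onD)
  with pos have "f s1 * f t1 < f s2 * f t1" "f s1 * f s2 < f t1 * f s2"
    by (simp_all add: mult_strict_right_mono)
  then have "f s1 * f t1 < f s1 * f t2" "f s1 * f s2 < f s1 * f t2"
    using eq by (simp_all add: mult.commute)
  with pos have "f t1 < f t2" "f s2 < f t2" by simp_all
  then show ?thesis
    using mono mem by (simp add: strict_mono_on_less)
qed

lemma overlap_half_range_imp_less:
  assumes "k > 0" "is_overlap k s1 t1 s2 t2"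
    and "s1 \<in> {1..k div 2}" "t1 \<in> {1..k div 2}"
    and "s2 \<in> {1..k div 2}" "t2 \<in> {1..k div 2}"
    and "s1 < s2" "s1 < t1"
  shows "s2 < t2 \<and> t1 < t2"
proof -
  define N where "N a = norm (phi k ^ a - 1)" for a
  have mono: "strict_mono_on {0..k div 2} N"
    unfolding N_def using strict_mono_on_norm_phi_power_minus_one[OF \<open>k > 0\<close>] .
  have "N 0 < N s1"
    using strict_mono_onD[OF mono] \<open>s1 \<in> {1..k div 2}\<close> by simp
  then have "0 < N s1" by (simp add: N_def)
  moreover have "N t1 * N s2 = N s1 * N t2"
    unfolding N_def by (rule overlap_norm_eq[OF \<open>is_overlap k s1 t1 s2 t2\<close>])
  ultimately show ?thesis
    using strict_mono_on_product_eq_imp_less[OF mono, of s1 t1 s2 t2] assms(3-8) by auto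
qed

theorem lemma35:
  fixes k s1 t1 s2 t2 s3 t3 :: nat
  assumes "k \<ge> 4" and "even k"
    and "triple_overlap k s1 t1 s2 t2 s3 t3"
    and "s1 \<in> {1..k div 2}" "t1 \<in> {1..k div 2}"
    and "s2 \<in> {1..k div 2}" "t2 \<in> {1..k div 2}"
    and "s3 \<in> {1..k div 2}" "t3 \<in> {1..k div 2}"
    and "s1 < s2" "s2 < s3" "s1 < t1"
  shows "s1 < t1 \<and> s2 < t2 \<and> s3 < t3 \<and> t1 < t2 \<and> t2 < t3"
proof -
  have "k > 0" using \<open>k \<ge> 4\<close> by simp
  have "is_overlap k s1 t1 s2 t2" "is_overlap k s2 t2 s3 t3"
    using \<open>triple_overlap k s1 t1 s2 t2 s3 t3\<close>
    unfolding triple_overlap_def in_O_def by auto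
  then have "s2 < t2 \<and> t1 < t2"
    using overlap_half_range_imp_less[OF \<open>k > 0\<close>, of s1 t1 s2 t2] assms(4-7,10,12)
    by simp
  moreover from this have "s3 < t3 \<and> t2 < t3"
    using overlap_half_range_imp_less[OF \<open>k > 0\<close> \<open>is_overlap k s2 t2 s3 t3\<close>]
      assms(6-9,11) by simp
  ultimately show ?thesis using \<open>s1 < t1\<close> by blast
qed

end
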